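(* Let $\Pi = (\mathcal{A}, \mathcal{E}, \mathcal{R})$ be an epistemic logic program and let $\Pi' = (\mathcal{A}, \mathcal{E}', \mathcal{R})$ be an epistemic logic program with the same set of rules and the same set of atoms, but with $\mathcal{E}' \supset \mathcal{E}$ and $\mathcal{E}' \setminus \mathcal{E} = \{ \mathbf{not}\, \ell \}$ for a single epistemic literal $\mathbf{not}\,\ell$. Then $\mathrm{CWV}(\Pi) = \mathrm{CWV}(\Pi')$.
   Context: A literal over a set of propositional atoms $\mathcal{A}$ is an atom $a$ or its default negation $\neg a$. An interpretation is a set $I\subseteq\mathcal{A}$; $I\models a$ iff $a\in I$, $I\models \neg \ell$ iff $I\not\models \ell$, extended to sets of literals conjunctively. A (plain) logic program is a pair $(\mathcal{A},\mathcal{R})$ with rules $a_1\vee\cdots\vee a_l \leftarrow a_{l+1},\ldots,a_m,\neg\ell_1,\ldots,\neg\ell_n$ ($a_i$ atoms, $\ell_i$ literals); $H(r)$ is the head, $B(r)$ the body, $B^+(r)=\{a_{l+1},\ldots,a_m\}$. $M\models r$ iff $M\models B(r)$ implies $M$ contains some atom of $H(r)$. The GL-reduct of $\Pi$ w.r.t. $I$ is $(\mathcal{A},\{H(r)\leftarrow B^+(r)\mid r\in\mathcal{R},\ I\models\neg\ell\text{ for all }\neg\ell\in B(r)\})$. $M$ is an answer set iff $M$ is a model of $\Pi$ and no $M'\subset M$ is a model of $\Pi^M$; $AS(\Pi)$ is the set of answer sets ($\neg\neg\neg a$ is treated as $\neg a$). An epistemic literal is $\mathbf{not}\,\ell$ for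 a literal $\ell$. An ELP is a triple $(\mathcal{A},\mathcal{E},\mathcal{R})$, $\mathcal{E}$ a set of epistemic literals over $\mathcal{A}$, rules $a_1\vee\cdots\vee a_k\leftarrow \ell_1,\ldots,\ell_m,\xi_1,\ldots,\xi_j,\neg\xi_{j+1},\ldots,\neg\xi_n$ with $\xi_i\in\mathcal{E}$. A guess is $\Phi\subseteq\mathcal{E}$. A set $\mathcal{I}$ of interpretations is $\Phi$-compatible w.r.t. $\mathcal{E}$ iff $\mathcal{I}\neq\emptyset$, for each $\mathbf{not}\,\ell\in\Phi$ some $I\in\mathcal{I}$ has $I\not\models\ell$, and for each $\mathbf{not}\,\ell\in\mathcal{E}\setminus\Phi$ all $I\in\mathcal{I}$ satisfy $\ell$. The epistemic reduct $\Pi^\Phi=(\mathcal{A},\mathcal{R}^\Phi)$ replaces each $\mathbf{not}\,\ell\in\Phi$ by $\top$ and every remaining $\mathbf{not}$ by $\neg$. $\mathcal{M}$ is a candidate world view of $\Pi$ iff for some guess $\Phi$, $\mathcal{M}=AS(\Pi^\Phi)$ and $\mathcal{M}$ is $\Phi$-compatible w.r.t. $\mathcal{E}$ (the domain $\mathcal{E}$ of the respective program); $\mathrm{CWV}(\Pi)$ is the set of these. *)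

theory Defs
  imports Main
begin

datatype 'a lit = Atom 'a | Neg "'a lit"

fun sat_lit :: "'a set \<Rightarrow> 'a lit \<Rightarrow> bool" where
  "sat_lit I (Atom a) = (a \<in> I)"
| "sat_lit I (Neg l) = (\<not> sat_lit I l)"

fun lit_atoms :: "'a lit \<Rightarrow> 'a set" where
  "lit_atoms (Atom a) = {a}"
| "lit_atoms (Neg l) = lit_atoms l"

text \<open>A plain rule  a1 v ... v al <- a(l+1),...,am, not l1, ..., not ln :
  head = [a1..al], pos = [a(l+1)..am], negs = [l1..ln] (the body contains the
  default negation of each element of negs).\<close>

record 'a prule =
  phead :: "'a list"
  ppos  :: "'a list"
  pneg  :: "'a lit list"

definition sat_pbody :: "'a set \<Rightarrow> 'a prule \<Rightarrow> bool" where
  "sat_pbody I r \<longleftrightarrow> (\<forall>a\<in>set (ppos r). a \<in> I) \<and> (\<forall>l\<in>set (pneg r). sat_lit I (Neg l))"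

definition sat_prule :: "'a set \<Rightarrow> 'a prule \<Rightarrow> bool" where
  "sat_prule M r \<longleftrightarrow> (sat_pbody M r \<longrightarrow> (\<exists>a\<in>set (phead r). a \<in> M))"

definition is_model :: "'a set \<Rightarrow> 'a prule set \<Rightarrow> bool" where
  "is_model M R \<longleftrightarrow> (\<forall>r\<in>R. sat_prule M r)"

definition gl_reduct :: "'a prule set \<Rightarrow> 'a set \<Rightarrow> 'a prule set" where
  "gl_reduct R I = {\<lparr>phead = phead r, ppos = ppos r, pneg = []\<rparr> | r.
      r \<in> R \<and> (\<forall>l\<in>set (pneg r). sat_lit I (Neg l))}"

definition AS :: "'a set \<Rightarrow> 'a prule set \<Rightarrow> 'a set set" where
  "AS A R = {M. M \<subseteq> A \<and> is_model M R \<and> \<not> (\<exists>M'. M' \<subset> M \<and> is_model M' (gl_reduct R M))}"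

datatype 'a elit = ENot "'a lit"

text \<open>ELP rule  a1 v..v ak <- l1,..,lm, xi1,..,xij, not xi(j+1),..,not xin :
  head = [a1..ak], lits = [l1..lm], epos = [xi1..xij], eneg = [xi(j+1)..xin].\<close>
record 'a erule =
  ehead :: "'a list"
  elits :: "'a lit list"
  epos  :: "'a elit list"
  eneg  :: "'a elit list"

fun elit_atoms :: "'a elit \<Rightarrow> 'a set" where
  "elit_atoms (ENot l) = lit_atoms l"

definition elp :: "'a set \<Rightarrow> 'a elit set \<Rightarrow> 'a erule set \<Rightarrow> bool" where
  "elp A E R \<longleftrightarrow>
     (\<forall>\<xi>\<in>E. elit_atoms \<xi> \<subseteq> A) \<and>
     (\<forall>r\<in>R. set (ehead r) \<subseteq> A \<and> (\<forall>l\<in>set (elits r). lit_atoms l \<subseteq> A)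
            \<and> set (epos r) \<subseteq> E \<and> set (eneg r) \<subseteq> E)"

text \<open>Epistemic reduct of a rule w.r.t. a guess Phi.  not l in Phi becomes T
  (dropped from the conjunctive body); a remaining  not l  becomes the default
  negation  Neg l ; hence  Neg (not l)  with  not l in Phi  becomes  Neg T  (an
  unsatisfiable body element, so the rule is removed), and  Neg (not l)  with
  not l notin Phi  becomes  Neg (Neg l).  Body literals Atom a are positive atoms,
  body literals Neg l are default negations of l.\<close>

fun pos_atoms :: "'a lit list \<Rightarrow> 'a list" where
  "pos_atoms [] = []"
| "pos_atoms (Atom a # ls) = a # pos_atoms ls"
| "pos_atoms (Neg l # ls) = pos_atoms ls"

fun neg_lits :: "'a lit list \<Rightarrow> 'a lit list" where
  "neg_lits [] = []"
| "neg_lits (Atom a # ls) = neg_lits ls"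
| "neg_lits (Neg l # ls) = l # neg_lits ls"

fun elit_lit :: "'a elit \<Rightarrow> 'a lit" where
  "elit_lit (ENot l) = l"

definition reduct_rule :: "'a elit set \<Rightarrow> 'a erule \<Rightarrow> 'a prule" where
  "reduct_rule \<Phi> r =
     \<lparr>phead = ehead r,
      ppos = pos_atoms (elits r),
      pneg = neg_lits (elits r)
             @ map elit_lit (filter (\<lambda>\<xi>. \<xi> \<notin> \<Phi>) (epos r))
             @ map (\<lambda>\<xi>. Neg (elit_lit \<xi>)) (eneg r)\<rparr>"

definition epistemic_reduct :: "'a elit set \<Rightarrow> 'a erule set \<Rightarrow> 'a prule set" where
  "epistemic_reduct \<Phi> R = reduct_rule \<Phi> ` {r \<in> R. \<forall>\<xi>\<in>set (eneg r). \<xi> \<notin> \<Phi>}"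

definition compatible :: "'a elit set \<Rightarrow> 'a elit set \<Rightarrow> 'a set set \<Rightarrow> bool" where
  "compatible E \<Phi> Ms \<longleftrightarrow> Ms \<noteq> {} \<and>
     (\<forall>l. ENot l \<in> \<Phi> \<longrightarrow> (\<exists>I\<in>Ms. \<not> sat_lit I l)) \<and>
     (\<forall>l. ENot l \<in> E - \<Phi> \<longrightarrow> (\<forall>I\<in>Ms. sat_lit I l))"

definition CWV :: "'a set \<Rightarrow> 'a elit set \<Rightarrow> 'a erule set \<Rightarrow> 'a set set set" where
  "CWV A E R = {Ms. \<exists>\<Phi>. \<Phi> \<subseteq> E \<and> Ms = AS A (epistemic_reduct \<Phi> R) \<and> compatible E \<Phi> Ms}"

end

theory Submission
  imports Defs
begin

text \<open>An epistemic literal that occurs in no rule does not influence the epistemic reduct, so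
  guesses only matter through their intersection with the literals the rules use. Enlarging the
  domain \<open>E\<close> therefore merely enlarges the guess: put a new literal \<open>not l\<close> into the guess
  exactly when some answer set violates \<open>l\<close>, which is what compatibility with the larger domain
  demands. Conversely a guess over the larger domain restricts to one over \<open>E\<close>. Neither direction
  needs the enlargement to consist of a single literal.\<close>

lemma epistemic_reduct_cong:
  assumes "\<And>r. r \<in> R \<Longrightarrow> set (epos r) \<union> set (eneg r) \<subseteq> E"
    and "\<Phi> \<inter> E = \<Psi> \<inter> E"
  shows "epistemic_reduct \<Phi> R = epistemic_reduct \<Psi> R"
proof -
  have same_rules: "{r \<in> R. \<forall>\<xi>\<in>set (eneg r). \<xi> \<notin> \<Phi>} = {r \<in> R. \<forall>\<xi>\<in>set (eneg r). \<xi> \<notin> \<Psi>}"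
    using assms by blast
  have "reduct_rule \<Phi> r = reduct_rule \<Psi> r" if "r \<in> R" for r
  proof -
    have "filter (\<lambda>\<xi>. \<xi> \<notin> \<Phi>) (epos r) = filter (\<lambda>\<xi>. \<xi> \<notin> \<Psi>) (epos r)"
      using assms that by (intro filter_cong) blast+
    then show ?thesis
      unfolding reduct_rule_def by simp
  qed
  then show ?thesis
    unfolding epistemic_reduct_def same_rules by (intro image_cong) auto
qed

lemma compatible_restrict:
  assumes "compatible E' \<Phi> Ms" and "E \<subseteq> E'"
  shows "compatible E (\<Phi> \<inter> E) Ms"
  using assms unfolding compatible_def by blast

lemma compatible_extend:
  assumes "compatible E \<Phi> Ms" and "\<Phi> \<subseteq> E"
  shows "compatible E' (\<Phi> \<union> {\<xi> \<in> E' - E. \<exists>I\<in>Ms. \<not> sat_lit I (elit_lit \<xi>)}) Ms"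
  using assms unfolding compatible_def by force

theorem CWV_enlarge_epistemic_domain:
  assumes "\<And>r. r \<in> R \<Longrightarrow> set (epos r) \<union> set (eneg r) \<subseteq> E" and "E \<subseteq> E'"
  shows "CWV A E R = CWV A E' R"
proof
  show "CWV A E R \<subseteq> CWV A E' R"
  proof
    fix Ms assume "Ms \<in> CWV A E R"
    then obtain \<Phi> where \<Phi>: "\<Phi> \<subseteq> E" "Ms = AS A (epistemic_reduct \<Phi> R)" "compatible E \<Phi> Ms"
      unfolding CWV_def by blast
    define \<Phi>' where "\<Phi>' = \<Phi> \<union> {\<xi> \<in> E' - E. \<exists>I\<in>Ms. \<not> sat_lit I (elit_lit \<xi>)}"
    have "epistemic_reduct \<Phi>' R = epistemic_reduct \<Phi> R"
      using assms(1) by (rule epistemic_reduct_cong) (auto simp: \<Phi>'_def)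
    moreover have "compatible E' \<Phi>' Ms"
      unfolding \<Phi>'_def using \<Phi>(3,1) by (rule compatible_extend)
    moreover have "\<Phi>' \<subseteq> E'"
      using \<Phi>(1) assms(2) by (auto simp: \<Phi>'_def)
    ultimately show "Ms \<in> CWV A E' R"
      unfolding CWV_def using \<Phi>(2) by (intro CollectI exI[of _ \<Phi>']) simp
  qed
  show "CWV A E' R \<subseteq> CWV A E R"
  proof
    fix Ms assume "Ms \<in> CWV A E' R"
    then obtain \<Phi> where \<Phi>: "Ms = AS A (epistemic_reduct \<Phi> R)" "compatible E' \<Phi> Ms"
      unfolding CWV_def by blast
    have "epistemic_reduct (\<Phi> \<inter> E) R = epistemic_reduct \<Phi> R"
      using assms(1) by (rule epistemic_reduct_cong) auto
    moreover have "compatible E (\<Phi> \<inter> E) Ms"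
      using \<Phi>(2) assms(2) by (rule compatible_restrict)
    ultimately show "Ms \<in> CWV A E R"
      unfolding CWV_def using \<Phi>(1) by (intro CollectI exI[of _ "\<Phi> \<inter> E"]) simp
  qed
qed

theorem proposition3:
  fixes A :: "'a set" and E E' :: "'a elit set" and R :: "'a erule set" and l :: "'a lit"
  assumes "elp A E R" and "elp A E' R"
    and "E \<subset> E'" and "E' - E = {ENot l}"
  shows "CWV A E R = CWV A E' R"
proof (rule CWV_enlarge_epistemic_domain)
  show "set (epos r) \<union> set (eneg r) \<subseteq> E" if "r \<in> R" for r
    using assms(1) that unfolding elp_def by blast
  show "E \<subseteq> E'"
    using assms(3) by blast
qed

end
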